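(* Fix positive integers $n_x$ and $N_h$, a scalar $\epsilon_r>0$ and a scalar $\eta>0$. Let $A_j, B, C, C_J, L, \Delta A \in \mathbb{R}^{n_x\times n_x}$ be given, with $B$ invertible, and let $C$ and $C_J$ be invertible. For $K\in\mathbb{R}^{n_x\times n_x}$ define $F_p(K,\delta_j)$, $F_r(K,\delta_j)$, $q(K,\delta_j)$ and $\kappa=F_p(K,\delta_j)F_r(K,\delta_j)^{-1}$ as in the context. Then there is a constant $\mu$ that does not depend on $K$ such that for every $K\in\mathbb{R}^{n_x\times n_x}$ $$q(K,\delta_j)\le \mu\,\bar q(K,\delta_j)^{f},\qquad \bar q(K,\delta_j)\triangleq \eta\|K\|_F^2+\sum_{i=2}^{n_xN_h}\sigma_i(\kappa^{-1}),\qquad f\triangleq n_xN_h-1 .$$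
   Context: Here $\delta_j$ labels one fixed realization of a parametric uncertainty. $A_j$ is the plant system matrix under $\delta_j$, $B$ is the input matrix, $C$ the measurement matrix, $C_J$ the performance output matrix, $L$ an observer gain, $\Delta A$ a given matrix (the uncertainty perturbation of the system matrix), and $K$ the feedback controller. Set $A_{x,j}\triangleq A_j+BKC$ and $A_{e,j}\triangleq A_j-LC$. For $\upsilon\in\{x,e\}$, $F_{\upsilon a}\in\mathbb{R}^{n_xN_h\times n_xN_h}$ is the block lower-triangular matrix whose $(k,l)$ block ($k,l=1,\dots,N_h$, blocks of size $n_x\times n_x$) is $A_{\upsilon,j}^{k-l}B$ for $k\ge l$ and $0$ for $k<l$. In particular $F_{xa}=F_{xa}(K,\delta_j)$ depends on $K$, while $F_{ea}=F_{ea}(\delta_j)$ does not. $F_{ex}(\delta_j)\in\mathbb{R}^{n_xN_h\times n_xN_h}$ is the strictly block lower-triangular matrix whose $(k,l)$ block is $A_{e,j}^{k-l-1}\Delta A$ for $k>l$ and $0$ otherwise. Define $$F_p(K,\delta_j)=(I_{N_h}\otimes C_J)F_{xa}(K,\delta_j),\qquad F_r(K,\delta_j)=(I_{N_h}\otimes C)\big(F_{ea}(\delta_j)+F_{ex}(\delta_j)F_{xa}(K,\delta_j)\big),$$ and $$q(K,\delta_j)=\sup\{\|F_p(K,\delta_j)\mathbf a\|_2^2:\ \mathbf a\in\mathbb{R}^{n_xN_h},\ \|F_r(K,\delta_j)\mathbf a\|_2^2\le\epsilon_r\}.$$ This is the worst-case squared performance-output energy over the horizon $N_h$ caused by a stacked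 attack sequence $\mathbf a$, subject to a bound on the detection-output energy and with zero initial state. $\|K\|_F$ is the Frobenius norm. $\sigma_1(M)\le\sigma_2(M)\le\dots\le\sigma_{n_xN_h}(M)$ denote the singular values of $M$ in nondecreasing order, so the sum in $\bar q$ omits the smallest singular value of $\kappa^{-1}$. *)

theory Defs
  imports "Jordan_Normal_Form.Matrix" "Jordan_Normal_Form.Char_Poly"
begin

text \<open>Block indices and entries are 0-based; blocks have size nx x nx,
  block (k,l) of an (nx*Nh)x(nx*Nh) matrix occupies rows k*nx..k*nx+nx-1.\<close>

definition block_mat :: "nat \<Rightarrow> nat \<Rightarrow> (nat \<Rightarrow> nat \<Rightarrow> real mat) \<Rightarrow> real mat" where
  "block_mat nx Nh blk = mat (nx * Nh) (nx * Nh)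
     (\<lambda>(r, c). blk (r div nx) (c div nx) $$ (r mod nx, c mod nx))"

definition kron_eye :: "nat \<Rightarrow> nat \<Rightarrow> real mat \<Rightarrow> real mat" where
  "kron_eye nx Nh M = block_mat nx Nh (\<lambda>k l. if k = l then M else 0\<^sub>m nx nx)"

definition F_a :: "nat \<Rightarrow> nat \<Rightarrow> real mat \<Rightarrow> real mat \<Rightarrow> real mat" where
  "F_a nx Nh M B = block_mat nx Nh (\<lambda>k l. if l \<le> k then (M ^\<^sub>m (k - l)) * B else 0\<^sub>m nx nx)"

definition F_ex :: "nat \<Rightarrow> nat \<Rightarrow> real mat \<Rightarrow> real mat \<Rightarrow> real mat" where
  "F_ex nx Nh Ae DA = block_mat nx Nh (\<lambda>k l. if l < k then (Ae ^\<^sub>m (k - l - 1)) * DA else 0\<^sub>m nx nx)"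

definition F_p :: "nat \<Rightarrow> nat \<Rightarrow> real mat \<Rightarrow> real mat \<Rightarrow> real mat \<Rightarrow> real mat \<Rightarrow> real mat \<Rightarrow> real mat" where
  "F_p nx Nh A B C CJ K = kron_eye nx Nh CJ * F_a nx Nh (A + B * K * C) B"

definition F_r :: "nat \<Rightarrow> nat \<Rightarrow> real mat \<Rightarrow> real mat \<Rightarrow> real mat \<Rightarrow> real mat \<Rightarrow> real mat
    \<Rightarrow> real mat \<Rightarrow> real mat" where
  "F_r nx Nh A B C L DA K = kron_eye nx Nh C *
     (F_a nx Nh (A - L * C) B + F_ex nx Nh (A - L * C) DA * F_a nx Nh (A + B * K * C) B)"

definition sqnorm :: "real vec \<Rightarrow> real" where
  "sqnorm v = v \<bullet> v"

definition q_worst :: "nat \<Rightarrow> nat \<Rightarrow> real \<Rightarrow> real mat \<Rightarrow> real mat \<Rightarrow> real mat \<Rightarrow> real mat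
    \<Rightarrow> real mat \<Rightarrow> real mat \<Rightarrow> real mat \<Rightarrow> real" where
  "q_worst nx Nh eps_r A B C CJ L DA K =
     Sup {sqnorm (F_p nx Nh A B C CJ K *\<^sub>v a) | a. a \<in> carrier_vec (nx * Nh)
            \<and> sqnorm (F_r nx Nh A B C L DA K *\<^sub>v a) \<le> eps_r}"

definition minv :: "real mat \<Rightarrow> real mat" where
  "minv M = (SOME N. N \<in> carrier_mat (dim_row M) (dim_row M)
                \<and> M * N = 1\<^sub>m (dim_row M) \<and> N * M = 1\<^sub>m (dim_row M))"

definition sing_vals :: "real mat \<Rightarrow> real list" where
  "sing_vals M = sort (map sqrt (SOME as. length as = dim_col M \<and>
      char_poly (transpose_mat M * M) = (\<Prod>a\<leftarrow>as. [:- a, 1:])))"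

text \<open>sigma_i(M), 1-based, i = 1 is the smallest.\<close>
definition sigma :: "real mat \<Rightarrow> nat \<Rightarrow> real" where
  "sigma M i = sing_vals M ! (i - 1)"

definition frob_norm :: "real mat \<Rightarrow> real" where
  "frob_norm K = sqrt (\<Sum>i<dim_row K. \<Sum>j<dim_col K. (K $$ (i, j))\<^sup>2)"

end

theory Submission
  imports Defs
begin

(* Both outputs are driven by the closed-loop state x = F_xa(K) a; the detection output is C
   applied blockwise to the estimation error e = (F_ea + F_ex F_xa) a. Eliminating the attack
   gives x_0 = e_0 and x_(k+1) = (A_x - DeltaA) x_k + e_(k+1) - A_e e_k, so
   |F_p a|_1 <= P(K) |F_r a|_1 with P a polynomial of degree N_h - 1 in |K|_F, and
   q(K) <= eps_r n P(K)^2 = O((1 + |K|_F^2)^f).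
   Conversely qbar(K) >= eta |K|_F^2 takes care of large K. For |K|_F <= 1 the entries of
   kappa are bounded by P(K), so |det kappa| is bounded above, |det kappa^-1| below, and with
   it the largest singular value of kappa^-1. Thus qbar(K) >= delta (1 + |K|_F^2) for some
   delta > 0, and mu = const / delta^f works. *)

section \<open>Entrywise 1-norms\<close>

definition vec_norm1 :: "real vec \<Rightarrow> real" where
  "vec_norm1 v = (\<Sum>i<dim_vec v. \<bar>v $ i\<bar>)"

definition mat_norm1 :: "real mat \<Rightarrow> real" where
  "mat_norm1 M = (\<Sum>i<dim_row M. \<Sum>j<dim_col M. \<bar>M $$ (i, j)\<bar>)"

lemma vec_norm1_nonneg: "0 \<le> vec_norm1 v"
  unfolding vec_norm1_def by (intro sum_nonneg) auto

lemma mat_norm1_nonneg: "0 \<le> mat_norm1 M"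
  unfolding mat_norm1_def by (intro sum_nonneg) auto

lemma abs_index_le_vec_norm1: "i < dim_vec v \<Longrightarrow> \<bar>v $ i\<bar> \<le> vec_norm1 v"
  unfolding vec_norm1_def by (rule member_le_sum) auto

lemma vec_norm1_eq_0_imp_zero: "vec_norm1 v = 0 \<Longrightarrow> v = 0\<^sub>v (dim_vec v)"
proof (rule eq_vecI)
  fix i assume "vec_norm1 v = 0" and "i < dim_vec (0\<^sub>v (dim_vec v) :: real vec)"
  then show "v $ i = 0\<^sub>v (dim_vec v) $ i"
    using abs_index_le_vec_norm1[of i v] by simp
qed simp

lemma vec_norm1_unit_vec: "j < n \<Longrightarrow> vec_norm1 (unit_vec n j) = 1"
  unfolding vec_norm1_def by (simp add: if_distrib[of abs] cong: if_cong)

lemma vec_norm1_add_le: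
  "v \<in> carrier_vec n \<Longrightarrow> w \<in> carrier_vec n \<Longrightarrow> vec_norm1 (v + w) \<le> vec_norm1 v + vec_norm1 w"
  unfolding vec_norm1_def by (auto simp: sum.distrib[symmetric] intro!: sum_mono abs_triangle_ineq)

lemma vec_norm1_diff_le:
  "v \<in> carrier_vec n \<Longrightarrow> w \<in> carrier_vec n \<Longrightarrow> vec_norm1 (v - w) \<le> vec_norm1 v + vec_norm1 w"
  unfolding vec_norm1_def by (auto simp: sum.distrib[symmetric] intro!: sum_mono abs_triangle_ineq4)

lemma mat_norm1_add_le:
  "X \<in> carrier_mat n m \<Longrightarrow> Y \<in> carrier_mat n m \<Longrightarrow> mat_norm1 (X + Y) \<le> mat_norm1 X + mat_norm1 Y"
  unfolding mat_norm1_def by (auto simp: sum.distrib[symmetric] intro!: sum_mono abs_triangle_ineq)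

lemma mat_norm1_diff_le:
  "X \<in> carrier_mat n m \<Longrightarrow> Y \<in> carrier_mat n m \<Longrightarrow> mat_norm1 (X - Y) \<le> mat_norm1 X + mat_norm1 Y"
  unfolding mat_norm1_def by (auto simp: sum.distrib[symmetric] intro!: sum_mono abs_triangle_ineq4)

lemma vec_norm1_mult_mat_vec_le:
  assumes "M \<in> carrier_mat n m" and "v \<in> carrier_vec m"
  shows "vec_norm1 (M *\<^sub>v v) \<le> mat_norm1 M * vec_norm1 v"
proof -
  have "vec_norm1 (M *\<^sub>v v) = (\<Sum>i<n. \<bar>\<Sum>j<m. M $$ (i, j) * v $ j\<bar>)"
    using assms unfolding vec_norm1_def
    by (auto simp: scalar_prod_def atLeast0LessThan intro!: sum.cong)
  also have "\<dots> \<le> (\<Sum>i<n. \<Sum>j<m. \<bar>M $$ (i, j)\<bar> * vec_norm1 v)"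
    using assms
    by (intro sum_mono order_trans[OF sum_abs])
       (auto simp: abs_mult intro!: mult_left_mono abs_index_le_vec_norm1)
  also have "\<dots> = mat_norm1 M * vec_norm1 v"
    using assms by (simp add: mat_norm1_def sum_distrib_right)
  finally show ?thesis .
qed

lemma mat_norm1_mult_le:
  assumes "X \<in> carrier_mat n m" and "Y \<in> carrier_mat m p"
  shows "mat_norm1 (X * Y) \<le> mat_norm1 X * mat_norm1 Y"
proof -
  have row_le: "(\<Sum>j<p. \<bar>Y $$ (k, j)\<bar>) \<le> mat_norm1 Y" if "k < m" for k
    using assms that unfolding mat_norm1_def
    by (auto intro!: member_le_sum[where f = "\<lambda>k. \<Sum>j<p. \<bar>Y $$ (k, j)\<bar>"] sum_nonneg)
  have "mat_norm1 (X * Y) = (\<Sum>i<n. \<Sum>j<p. \<bar>\<Sum>k<m. X $$ (i, k) * Y $$ (k, j)\<bar>)"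
    using assms unfolding mat_norm1_def
    by (auto simp: scalar_prod_def atLeast0LessThan intro!: sum.cong)
  also have "\<dots> \<le> (\<Sum>i<n. \<Sum>j<p. \<Sum>k<m. \<bar>X $$ (i, k)\<bar> * \<bar>Y $$ (k, j)\<bar>)"
    by (intro sum_mono) (auto simp: abs_mult[symmetric] intro: order_trans[OF sum_abs])
  also have "\<dots> = (\<Sum>i<n. \<Sum>k<m. \<bar>X $$ (i, k)\<bar> * (\<Sum>j<p. \<bar>Y $$ (k, j)\<bar>))"
    by (simp add: sum_distrib_left sum.swap[of _ "{..<p}"])
  also have "\<dots> \<le> (\<Sum>i<n. \<Sum>k<m. \<bar>X $$ (i, k)\<bar> * mat_norm1 Y)"
    by (intro sum_mono mult_left_mono row_le) auto
  also have "\<dots> = mat_norm1 X * mat_norm1 Y"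
    using assms by (simp add: mat_norm1_def sum_distrib_right)
  finally show ?thesis .
qed

lemma sqnorm_le_vec_norm1_sq: "sqnorm v \<le> (vec_norm1 v)\<^sup>2"
proof -
  have "sqnorm v = (\<Sum>i<dim_vec v. \<bar>v $ i\<bar> * \<bar>v $ i\<bar>)"
    unfolding sqnorm_def scalar_prod_def by (auto simp: atLeast0LessThan intro!: sum.cong)
  also have "\<dots> \<le> (\<Sum>i<dim_vec v. \<bar>v $ i\<bar> * vec_norm1 v)"
    by (intro sum_mono mult_left_mono abs_index_le_vec_norm1) auto
  also have "\<dots> = (vec_norm1 v)\<^sup>2"
    by (simp add: sum_distrib_right[symmetric] vec_norm1_def power2_eq_square)
  finally show ?thesis .
qed

lemma vec_norm1_sq_le_dim_mult_sqnorm: "(vec_norm1 v)\<^sup>2 \<le> dim_vec v * sqnorm v"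
proof -
  let ?n = "dim_vec v"
  have "(vec_norm1 v)\<^sup>2 = (\<Sum>i<?n. \<Sum>j<?n. \<bar>v $ i\<bar> * \<bar>v $ j\<bar>)"
    by (simp add: vec_norm1_def power2_eq_square sum_product)
  also have "\<dots> \<le> (\<Sum>i<?n. \<Sum>j<?n. ((v $ i)\<^sup>2 + (v $ j)\<^sup>2) / 2)"
  proof (intro sum_mono)
    fix i j
    have "0 \<le> (\<bar>v $ i\<bar> - \<bar>v $ j\<bar>)\<^sup>2" by simp
    then show "\<bar>v $ i\<bar> * \<bar>v $ j\<bar> \<le> ((v $ i)\<^sup>2 + (v $ j)\<^sup>2) / 2"
      by (simp add: power2_eq_square algebra_simps)
  qed
  also have "\<dots> = real ?n * (\<Sum>i<?n. (v $ i)\<^sup>2)"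
    by (simp add: sum.distrib add_divide_distrib sum_divide_distrib[symmetric]
        sum.swap[of _ "{..<?n}"] sum_distrib_left[symmetric])
  also have "\<dots> = ?n * sqnorm v"
    unfolding sqnorm_def scalar_prod_def by (auto simp: atLeast0LessThan power2_eq_square)
  finally show ?thesis .
qed

lemma frob_norm_nonneg: "0 \<le> frob_norm K"
  unfolding frob_norm_def by (auto intro!: sum_nonneg)

lemma abs_index_le_frob_norm:
  assumes "K \<in> carrier_mat n m" and "i < n" and "j < m"
  shows "\<bar>K $$ (i, j)\<bar> \<le> frob_norm K"
proof -
  have "(K $$ (i, j))\<^sup>2 \<le> (\<Sum>j<m. (K $$ (i, j))\<^sup>2)"
    by (rule member_le_sum[where f = "\<lambda>j. (K $$ (i, j))\<^sup>2"]) (use assms in auto)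
  also have "\<dots> \<le> (\<Sum>i<n. \<Sum>j<m. (K $$ (i, j))\<^sup>2)"
    by (rule member_le_sum[where f = "\<lambda>i. \<Sum>j<m. (K $$ (i, j))\<^sup>2"])
      (use assms in \<open>auto intro: sum_nonneg\<close>)
  finally have "sqrt ((K $$ (i, j))\<^sup>2) \<le> sqrt (\<Sum>i<n. \<Sum>j<m. (K $$ (i, j))\<^sup>2)"
    by (rule real_sqrt_le_mono)
  then show ?thesis
    using assms unfolding frob_norm_def by simp
qed

lemma mat_norm1_le_frob_norm:
  assumes "K \<in> carrier_mat n m"
  shows "mat_norm1 K \<le> real (n * m) * frob_norm K"
proof -
  have "mat_norm1 K = (\<Sum>i<n. \<Sum>j<m. \<bar>K $$ (i, j)\<bar>)"
    using assms by (simp add: mat_norm1_def)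
  also have "\<dots> \<le> (\<Sum>i<n. \<Sum>j<m. frob_norm K)"
    by (intro sum_mono abs_index_le_frob_norm[OF assms]) auto
  finally show ?thesis by simp
qed

section \<open>Block vectors and block lower-triangular matrices\<close>

definition block_vec :: "nat \<Rightarrow> real vec \<Rightarrow> nat \<Rightarrow> real vec" where
  "block_vec nx v k = vec nx (\<lambda>i. v $ (k * nx + i))"

definition vec_sum :: "nat \<Rightarrow> (nat \<Rightarrow> real vec) \<Rightarrow> nat set \<Rightarrow> real vec" where
  "vec_sum nx f S = vec nx (\<lambda>i. \<Sum>l\<in>S. f l $ i)"

lemma block_vec_carrier [simp]: "block_vec nx v k \<in> carrier_vec nx"
  and dim_block_vec [simp]: "dim_vec (block_vec nx v k) = nx"
  and index_block_vec [simp]: "i < nx \<Longrightarrow> block_vec nx v k $ i = v $ (k * nx + i)"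
  unfolding block_vec_def by simp_all

lemma vec_sum_carrier [simp]: "vec_sum nx f S \<in> carrier_vec nx"
  and dim_vec_sum [simp]: "dim_vec (vec_sum nx f S) = nx"
  and index_vec_sum [simp]: "i < nx \<Longrightarrow> vec_sum nx f S $ i = (\<Sum>l\<in>S. f l $ i)"
  unfolding vec_sum_def by simp_all

lemma vec_sum_empty [simp]: "vec_sum nx f {} = 0\<^sub>v nx"
  by (intro eq_vecI) auto

lemma vec_sum_insert:
  "finite S \<Longrightarrow> l \<notin> S \<Longrightarrow> f l \<in> carrier_vec nx \<Longrightarrow> vec_sum nx f (insert l S) = f l + vec_sum nx f S"
  by (intro eq_vecI) auto

lemma vec_sum_cong: "(\<And>l. l \<in> S \<Longrightarrow> f l = g l) \<Longrightarrow> vec_sum nx f S = vec_sum nx g S"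
  unfolding vec_sum_def by (intro eq_vecI) auto

lemma mult_mat_vec_sum:
  assumes M: "M \<in> carrier_mat n nx" and f: "\<And>l. l \<in> S \<Longrightarrow> f l \<in> carrier_vec nx"
  shows "M *\<^sub>v vec_sum nx f S = vec_sum n (\<lambda>l. M *\<^sub>v f l) S"
proof (rule eq_vecI)
  fix i assume "i < dim_vec (vec_sum n (\<lambda>l. M *\<^sub>v f l) S)"
  then have i: "i < n" by simp
  have "(M *\<^sub>v vec_sum nx f S) $ i = (\<Sum>j<nx. M $$ (i, j) * (\<Sum>l\<in>S. f l $ j))"
    using M i by (simp add: scalar_prod_def atLeast0LessThan)
  also have "\<dots> = (\<Sum>l\<in>S. \<Sum>j<nx. M $$ (i, j) * f l $ j)"
    by (simp add: sum_distrib_left sum.swap[of _ S])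
  also have "\<dots> = (\<Sum>l\<in>S. (M *\<^sub>v f l) $ i)"
  proof (intro sum.cong refl)
    fix l assume "l \<in> S"
    then have "dim_vec (f l) = nx" using f by (blast intro: carrier_vecD)
    then show "(\<Sum>j<nx. M $$ (i, j) * f l $ j) = (M *\<^sub>v f l) $ i"
      using M i by (simp add: scalar_prod_def atLeast0LessThan)
  qed
  finally show "(M *\<^sub>v vec_sum nx f S) $ i = vec_sum n (\<lambda>l. M *\<^sub>v f l) S $ i"
    using i by simp
qed (use M in simp)

lemma mult_mat_vec_zero [simp]: "M \<in> carrier_mat n m \<Longrightarrow> M *\<^sub>v 0\<^sub>v m = 0\<^sub>v n"
  by (intro eq_vecI) auto

lemma block_index_less:
  fixes nx Nh :: nat
  assumes "i < nx" and "k < Nh"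
  shows "k * nx + i < nx * Nh"
proof -
  have "k * nx + i < (k + 1) * nx" using assms by simp
  also have "\<dots> \<le> Nh * nx" using assms by (intro mult_right_mono) auto
  finally show ?thesis by (simp add: mult.commute)
qed

lemma block_vec_add:
  "v \<in> carrier_vec (nx * Nh) \<Longrightarrow> w \<in> carrier_vec (nx * Nh) \<Longrightarrow> k < Nh \<Longrightarrow>
     block_vec nx (v + w) k = block_vec nx v k + block_vec nx w k"
  by (intro eq_vecI) (auto simp: block_index_less)

lemma block_vec_zero: "k < Nh \<Longrightarrow> block_vec nx (0\<^sub>v (nx * Nh)) k = 0\<^sub>v nx"
  by (intro eq_vecI) (auto simp: block_index_less)

lemma block_vec_eqI:
  assumes v: "v \<in> carrier_vec (nx * Nh)" and w: "w \<in> carrier_vec (nx * Nh)"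
    and eq: "\<And>k. k < Nh \<Longrightarrow> block_vec nx v k = block_vec nx w k"
  shows "v = w"
proof (rule eq_vecI)
  fix c assume "c < dim_vec w"
  then have c: "c < nx * Nh" using w by simp
  then have "0 < nx" by (cases nx) auto
  then have "c div nx < Nh" and i: "c mod nx < nx"
    using c by (auto simp: less_mult_imp_div_less mult.commute)
  then have "block_vec nx v (c div nx) $ (c mod nx) = block_vec nx w (c div nx) $ (c mod nx)"
    using eq by simp
  then show "v $ c = w $ c" using i by simp
qed (use v w in simp)

lemma sum_blocks: "(\<Sum>c<nx * Nh :: nat. g c) = (\<Sum>l<Nh. \<Sum>j<nx. g (l * nx + j))"
proof -
  have shift: "sum g {a..<a + nx} = (\<Sum>j<nx. g (a + j))" for a
    by (induct nx) auto
  have "(\<Sum>c<nx * Nh. g c) = (\<Sum>l<Nh. sum g {l * nx..<l * nx + nx})"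
    by (simp only: mult.commute[of nx Nh] sum.nat_group)
  also have "\<dots> = (\<Sum>l<Nh. \<Sum>j<nx. g (l * nx + j))" by (simp add: shift)
  finally show ?thesis .
qed

lemma vec_norm1_eq_sum_blocks:
  "v \<in> carrier_vec (nx * Nh) \<Longrightarrow> vec_norm1 v = (\<Sum>k<Nh. vec_norm1 (block_vec nx v k))"
  unfolding vec_norm1_def by (simp add: sum_blocks)

lemma vec_norm1_block_le:
  assumes "v \<in> carrier_vec (nx * Nh)" and "k < Nh"
  shows "vec_norm1 (block_vec nx v k) \<le> vec_norm1 v"
  unfolding vec_norm1_eq_sum_blocks[OF assms(1)]
  by (rule member_le_sum[where f = "\<lambda>k. vec_norm1 (block_vec nx v k)"])
    (use assms(2) in \<open>auto intro: vec_norm1_nonneg\<close>)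

lemma block_mat_carrier [simp]: "block_mat nx Nh F \<in> carrier_mat (nx * Nh) (nx * Nh)"
  unfolding block_mat_def by simp

lemma block_vec_block_mat_mult:
  assumes F: "\<And>l. l < Nh \<Longrightarrow> F k l \<in> carrier_mat nx nx"
    and v: "v \<in> carrier_vec (nx * Nh)" and k: "k < Nh"
  shows "block_vec nx (block_mat nx Nh F *\<^sub>v v) k = vec_sum nx (\<lambda>l. F k l *\<^sub>v block_vec nx v l) {..<Nh}"
proof (rule eq_vecI)
  fix i assume "i < dim_vec (vec_sum nx (\<lambda>l. F k l *\<^sub>v block_vec nx v l) {..<Nh})"
  then have i: "i < nx" by simp
  have divmod: "(k * nx + i) div nx = k" "(k * nx + i) mod nx = i"
    using i by (simp_all add: add.commute[of "k * nx" i])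
  have "block_vec nx (block_mat nx Nh F *\<^sub>v v) k $ i
      = (\<Sum>c<nx * Nh. F k (c div nx) $$ (i, c mod nx) * v $ c)"
    using i k v block_index_less[OF i k] divmod
    by (simp add: block_mat_def scalar_prod_def atLeast0LessThan)
  also have "\<dots> = (\<Sum>l<Nh. \<Sum>j<nx. F k l $$ (i, j) * v $ (l * nx + j))"
    by (subst sum_blocks) (auto intro!: sum.cong)
  also have "\<dots> = (\<Sum>l<Nh. (F k l *\<^sub>v block_vec nx v l) $ i)"
  proof (intro sum.cong refl)
    fix l assume "l \<in> {..<Nh}"
    then have "F k l \<in> carrier_mat nx nx" using F by simp
    then show "(\<Sum>j<nx. F k l $$ (i, j) * v $ (l * nx + j)) = (F k l *\<^sub>v block_vec nx v l) $ i"
      using i by (simp add: scalar_prod_def atLeast0LessThan)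
  qed
  finally show "block_vec nx (block_mat nx Nh F *\<^sub>v v) k $ i
      = vec_sum nx (\<lambda>l. F k l *\<^sub>v block_vec nx v l) {..<Nh} $ i"
    using i by simp
qed simp

lemma block_vec_block_mat_mult_masked:
  assumes G: "\<And>l. l < Nh \<Longrightarrow> G k l \<in> carrier_mat nx nx"
    and v: "v \<in> carrier_vec (nx * Nh)" and k: "k < Nh"
  shows "block_vec nx (block_mat nx Nh (\<lambda>k l. if P k l then G k l else 0\<^sub>m nx nx) *\<^sub>v v) k
       = vec_sum nx (\<lambda>l. G k l *\<^sub>v block_vec nx v l) {l. l < Nh \<and> P k l}"
proof (rule eq_vecI)
  fix i assume "i < dim_vec (vec_sum nx (\<lambda>l. G k l *\<^sub>v block_vec nx v l) {l. l < Nh \<and> P k l})"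
  then have i: "i < nx" by simp
  have "block_vec nx (block_mat nx Nh (\<lambda>k l. if P k l then G k l else 0\<^sub>m nx nx) *\<^sub>v v) k $ i
      = (\<Sum>l<Nh. if P k l then (G k l *\<^sub>v block_vec nx v l) $ i else 0)"
    using G i by (subst block_vec_block_mat_mult[OF _ v k]) (auto intro!: sum.cong)
  also have "\<dots> = (\<Sum>l\<in>{l \<in> {..<Nh}. P k l}. (G k l *\<^sub>v block_vec nx v l) $ i)"
    by (rule sum.inter_filter[symmetric]) simp
  finally show "block_vec nx (block_mat nx Nh (\<lambda>k l. if P k l then G k l else 0\<^sub>m nx nx) *\<^sub>v v) k $ i
      = vec_sum nx (\<lambda>l. G k l *\<^sub>v block_vec nx v l) {l. l < Nh \<and> P k l} $ i"
    using i by simp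
qed simp

lemma kron_eye_carrier [simp]: "kron_eye nx Nh M \<in> carrier_mat (nx * Nh) (nx * Nh)"
  and F_a_carrier [simp]: "F_a nx Nh M B \<in> carrier_mat (nx * Nh) (nx * Nh)"
  and F_ex_carrier [simp]: "F_ex nx Nh M D \<in> carrier_mat (nx * Nh) (nx * Nh)"
  unfolding kron_eye_def F_a_def F_ex_def by simp_all

lemma block_vec_kron_eye_mult:
  assumes "M \<in> carrier_mat nx nx" and "v \<in> carrier_vec (nx * Nh)" and "k < Nh"
  shows "block_vec nx (kron_eye nx Nh M *\<^sub>v v) k = M *\<^sub>v block_vec nx v k"
proof -
  have "block_vec nx (kron_eye nx Nh M *\<^sub>v v) k
      = vec_sum nx (\<lambda>l. M *\<^sub>v block_vec nx v l) {l. l < Nh \<and> k = l}"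
    unfolding kron_eye_def by (rule block_vec_block_mat_mult_masked) (use assms in auto)
  also have "{l. l < Nh \<and> k = l} = {k}" using assms(3) by auto
  finally show ?thesis
    using mult_mat_vec_carrier[OF assms(1) block_vec_carrier] by (simp add: vec_sum_insert)
qed

definition forced_response :: "nat \<Rightarrow> real mat \<Rightarrow> real mat \<Rightarrow> real vec \<Rightarrow> nat \<Rightarrow> real vec" where
  "forced_response nx M B a k = vec_sum nx (\<lambda>l. (M ^\<^sub>m (k - l) * B) *\<^sub>v block_vec nx a l) {..k}"

lemma forced_response_carrier [simp]: "forced_response nx M B a k \<in> carrier_vec nx"
  unfolding forced_response_def by simp

lemma forced_response_0:
  "M \<in> carrier_mat nx nx \<Longrightarrow> B \<in> carrier_mat nx nx \<Longrightarrow>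
     forced_response nx M B a 0 = B *\<^sub>v block_vec nx a 0"
  unfolding forced_response_def by (simp add: atMost_0 vec_sum_insert)

lemma pow_mat_Suc_left: "M \<in> carrier_mat n n \<Longrightarrow> M ^\<^sub>m Suc k = M * M ^\<^sub>m k"
  by (induct k) (auto simp: assoc_mult_mat[of M n n _ n M n])

lemma forced_response_Suc:
  assumes M: "M \<in> carrier_mat nx nx" and B: "B \<in> carrier_mat nx nx"
  shows "forced_response nx M B a (Suc k)
       = M *\<^sub>v forced_response nx M B a k + B *\<^sub>v block_vec nx a (Suc k)"
proof -
  have step: "(M ^\<^sub>m (Suc k - l) * B) *\<^sub>v block_vec nx a l
      = M *\<^sub>v ((M ^\<^sub>m (k - l) * B) *\<^sub>v block_vec nx a l)" if "l \<le> k" for l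
  proof -
    have "M ^\<^sub>m (Suc k - l) = M * M ^\<^sub>m (k - l)"
      using that M by (simp only: Suc_diff_le pow_mat_Suc_left)
    then have "M ^\<^sub>m (Suc k - l) * B = M * (M ^\<^sub>m (k - l) * B)"
      using M B by (simp add: assoc_mult_mat[of M nx nx _ nx B nx])
    then show ?thesis
      by (metis assoc_mult_mat_vec M B block_vec_carrier mult_carrier_mat pow_carrier_mat)
  qed
  have "forced_response nx M B a (Suc k)
      = (M ^\<^sub>m 0 * B) *\<^sub>v block_vec nx a (Suc k)
        + vec_sum nx (\<lambda>l. (M ^\<^sub>m (Suc k - l) * B) *\<^sub>v block_vec nx a l) {..k}"
    unfolding forced_response_def atMost_Suc using M B by (subst vec_sum_insert) auto
  also have "M ^\<^sub>m 0 * B = B" using M B by simp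
  also have "vec_sum nx (\<lambda>l. (M ^\<^sub>m (Suc k - l) * B) *\<^sub>v block_vec nx a l) {..k}
      = vec_sum nx (\<lambda>l. M *\<^sub>v ((M ^\<^sub>m (k - l) * B) *\<^sub>v block_vec nx a l)) {..k}"
    by (rule vec_sum_cong) (simp add: step)
  also have "\<dots> = M *\<^sub>v forced_response nx M B a k"
    unfolding forced_response_def using M B
    by (subst mult_mat_vec_sum[OF M]) (auto intro!: mult_mat_vec_carrier[of _ nx nx])
  finally show ?thesis using M B by (simp add: comm_add_vec[of _ nx])
qed

lemma block_vec_F_a_mult:
  assumes "M \<in> carrier_mat nx nx" and "B \<in> carrier_mat nx nx"
    and "a \<in> carrier_vec (nx * Nh)" and "k < Nh"
  shows "block_vec nx (F_a nx Nh M B *\<^sub>v a) k = forced_response nx M B a k"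
proof -
  have "block_vec nx (F_a nx Nh M B *\<^sub>v a) k
      = vec_sum nx (\<lambda>l. (M ^\<^sub>m (k - l) * B) *\<^sub>v block_vec nx a l) {l. l < Nh \<and> l \<le> k}"
    unfolding F_a_def by (rule block_vec_block_mat_mult_masked) (use assms in auto)
  also have "{l. l < Nh \<and> l \<le> k} = {..k}" using assms(4) by auto
  finally show ?thesis unfolding forced_response_def .
qed

lemma block_vec_F_ex_mult:
  assumes "M \<in> carrier_mat nx nx" and "D \<in> carrier_mat nx nx"
    and "a \<in> carrier_vec (nx * Nh)" and "k < Nh"
  shows "block_vec nx (F_ex nx Nh M D *\<^sub>v a) k
       = (if k = 0 then 0\<^sub>v nx else forced_response nx M D a (k - 1))"
proof -
  have "block_vec nx (F_ex nx Nh M D *\<^sub>v a) k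
      = vec_sum nx (\<lambda>l. (M ^\<^sub>m (k - l - 1) * D) *\<^sub>v block_vec nx a l) {l. l < Nh \<and> l < k}"
    unfolding F_ex_def by (rule block_vec_block_mat_mult_masked) (use assms in auto)
  also have "\<dots> = (if k = 0 then 0\<^sub>v nx else forced_response nx M D a (k - 1))"
  proof (cases k)
    case (Suc j)
    then have "{l. l < Nh \<and> l < k} = {..j}" using assms(4) by auto
    then show ?thesis
      unfolding forced_response_def using Suc by (auto intro: vec_sum_cong)
  qed simp
  finally show ?thesis .
qed

lemma block_vec_F_ex_mult_Suc:
  assumes M: "M \<in> carrier_mat nx nx" and D: "D \<in> carrier_mat nx nx"
    and a: "a \<in> carrier_vec (nx * Nh)" and k: "Suc k < Nh"
  shows "block_vec nx (F_ex nx Nh M D *\<^sub>v a) (Suc k)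
       = M *\<^sub>v block_vec nx (F_ex nx Nh M D *\<^sub>v a) k + D *\<^sub>v block_vec nx a k"
proof (cases k)
  case 0
  then show ?thesis
    using M D k mult_mat_vec_carrier[OF D block_vec_carrier]
    by (simp add: block_vec_F_ex_mult[OF M D a] forced_response_0)
next
  case (Suc j)
  then show ?thesis
    using M D k by (simp add: block_vec_F_ex_mult[OF M D a] forced_response_Suc)
qed

section \<open>Inverses, determinants and singular values\<close>

lemma minv_inverse:
  fixes X :: "real mat"
  assumes X: "X \<in> carrier_mat n n"
    and inv: "\<exists>N. N \<in> carrier_mat n n \<and> X * N = 1\<^sub>m n \<and> N * X = 1\<^sub>m n"
  shows "minv X \<in> carrier_mat n n" and "X * minv X = 1\<^sub>m n" and "minv X * X = 1\<^sub>m n"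
  using someI_ex[OF inv] X unfolding minv_def by auto

lemma invertible_mat_inverse_exists:
  assumes M: "M \<in> carrier_mat n n" and "invertible_mat M"
  shows "\<exists>N. N \<in> carrier_mat n n \<and> M * N = 1\<^sub>m n \<and> N * M = 1\<^sub>m n"
proof -
  from assms(2) obtain N where "inverts_mat M N" and "inverts_mat N M"
    unfolding invertible_mat_def by auto
  with M have MN: "M * N = 1\<^sub>m n" and NM: "N * M = 1\<^sub>m (dim_row N)"
    unfolding inverts_mat_def by auto
  have "dim_col N = n" using arg_cong[OF MN, of dim_col] by simp
  moreover have "dim_row N = n" using arg_cong[OF NM, of dim_col] M by simp
  ultimately show ?thesis using MN NM by (auto intro!: carrier_matI)
qed

lemma det_nonzero_inverse_exists:
  fixes X :: "'a :: field mat"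
  assumes X: "X \<in> carrier_mat n n" and "det X \<noteq> 0"
  shows "\<exists>N. N \<in> carrier_mat n n \<and> X * N = 1\<^sub>m n \<and> N * X = 1\<^sub>m n"
proof (cases "mat_inverse X")
  case None
  have "X \<in> Units (ring_mat TYPE('a) n n)" by (rule det_non_zero_imp_unit[OF assms])
  with mat_inverse(1)[OF X None, of n] show ?thesis by auto
next
  case (Some N)
  from mat_inverse(2)[OF X Some] show ?thesis by auto
qed

lemma minv_mult_mat_vec_cancel:
  fixes X :: "real mat"
  assumes X: "X \<in> carrier_mat n n"
    and inv: "\<exists>N. N \<in> carrier_mat n n \<and> X * N = 1\<^sub>m n \<and> N * X = 1\<^sub>m n"
    and v: "v \<in> carrier_vec n"
  shows "minv X *\<^sub>v (X *\<^sub>v v) = v"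
  using assoc_mult_mat_vec[OF minv_inverse(1)[OF X inv] X v] minv_inverse(3)[OF X inv] v by simp

lemma invertible_mat_mult_vec_eq_0:
  fixes M :: "real mat"
  assumes "M \<in> carrier_mat n n" and "invertible_mat M"
    and "v \<in> carrier_vec n" and "M *\<^sub>v v = 0\<^sub>v n"
  shows "v = 0\<^sub>v n"
proof -
  note inv = invertible_mat_inverse_exists[OF assms(1,2)]
  have "v = minv M *\<^sub>v (M *\<^sub>v v)" using minv_mult_mat_vec_cancel[OF assms(1) inv assms(3)] ..
  also have "\<dots> = 0\<^sub>v n" using assms(4) minv_inverse(1)[OF assms(1) inv] by simp
  finally show ?thesis .
qed

lemma det_minv:
  fixes X :: "real mat"
  assumes X: "X \<in> carrier_mat n n" and d: "det X \<noteq> 0"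
  shows "det (minv X) = 1 / det X"
proof -
  note inv = det_nonzero_inverse_exists[OF X d]
  have "det X * det (minv X) = 1"
    using det_mult[OF X minv_inverse(1)[OF X inv]] minv_inverse(2)[OF X inv] by simp
  with d show ?thesis by (simp add: field_simps)
qed

lemma abs_det_le_fact_mult_pow:
  fixes X :: "real mat"
  assumes X: "X \<in> carrier_mat n n" and m: "\<And>i j. i < n \<Longrightarrow> j < n \<Longrightarrow> \<bar>X $$ (i, j)\<bar> \<le> m"
  shows "\<bar>det X\<bar> \<le> fact n * m ^ n"
proof -
  have "\<bar>det X\<bar> \<le> (\<Sum>p\<in>{p. p permutes {0..<n}}. \<bar>signof p * (\<Prod>i=0..<n. X $$ (i, p i))\<bar>)"
    unfolding det_def'[OF X] by (rule sum_abs)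
  also have "\<dots> \<le> (\<Sum>p\<in>{p. p permutes {0..<n}}. m ^ n)"
  proof (intro sum_mono)
    fix p assume "p \<in> {p. p permutes {0..<n}}"
    then have p: "p permutes {0..<n}" by simp
    have "\<bar>\<Prod>i=0..<n. X $$ (i, p i)\<bar> = (\<Prod>i=0..<n. \<bar>X $$ (i, p i)\<bar>)" by (rule abs_prod)
    also have "\<dots> \<le> (\<Prod>i=0..<n. m)"
      by (intro prod_mono) (use m permutes_in_image[OF p] in auto)
    finally show "\<bar>signof p * (\<Prod>i=0..<n. X $$ (i, p i))\<bar> \<le> m ^ n"
      by (simp add: abs_mult sign_def)
  qed
  also have "\<dots> = fact n * m ^ n" by (simp add: card_permutations)
  finally show ?thesis .
qed

lemma sqnorm_pos:
  assumes "v \<in> carrier_vec n" and "v \<noteq> 0\<^sub>v n"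
  shows "0 < sqnorm v"
proof -
  obtain i where i: "i < n" "v $ i \<noteq> 0"
    using assms by (metis eq_vecI carrier_vecD index_zero_vec)
  have "0 < (v $ i)\<^sup>2" using i by simp
  also have "\<dots> \<le> (\<Sum>i<n. (v $ i)\<^sup>2)"
    by (rule member_le_sum[where f = "\<lambda>i. (v $ i)\<^sup>2"]) (use i in auto)
  also have "\<dots> = sqnorm v"
    using assms unfolding sqnorm_def scalar_prod_def by (simp add: atLeast0LessThan power2_eq_square)
  finally show ?thesis .
qed

lemma sqnorm_nonneg: "0 \<le> sqnorm v"
  unfolding sqnorm_def scalar_prod_def by (intro sum_nonneg) simp

lemma eigenvalue_real_symmetric_is_real:
  fixes S :: "real mat" and c :: complex
  assumes S: "S \<in> carrier_mat n n" and sym: "\<And>i j. i < n \<Longrightarrow> j < n \<Longrightarrow> S $$ (i, j) = S $$ (j, i)"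
    and ev: "eigenvalue (map_mat complex_of_real S) c"
  shows "Im c = 0"
proof -
  let ?S = "map_mat complex_of_real S"
  from ev obtain v where v: "v \<in> carrier_vec n" "v \<noteq> 0\<^sub>v n" "?S *\<^sub>v v = c \<cdot>\<^sub>v v"
    unfolding eigenvalue_def eigenvector_def using S by auto
  have row: "(\<Sum>j<n. of_real (S $$ (i, j)) * v $ j) = c * v $ i" if "i < n" for i
    using arg_cong[OF v(3), of "\<lambda>w. w $ i"] that S v(1) by (simp add: scalar_prod_def atLeast0LessThan)
  define Y where "Y = (\<Sum>i<n. \<Sum>j<n. of_real (S $$ (i, j)) * cnj (v $ i) * v $ j)"
  define N where "N = (\<Sum>i<n. (Re (v $ i))\<^sup>2 + (Im (v $ i))\<^sup>2)"
  have cnj_mult: "cnj z * z = complex_of_real ((Re z)\<^sup>2 + (Im z)\<^sup>2)" for z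
    by (simp add: complex_eq_iff power2_eq_square)
  have "Y = (\<Sum>i<n. cnj (v $ i) * (\<Sum>j<n. of_real (S $$ (i, j)) * v $ j))"
    unfolding Y_def by (simp add: sum_distrib_left mult.assoc mult.left_commute)
  also have "\<dots> = c * (\<Sum>i<n. cnj (v $ i) * v $ i)"
    by (simp add: row sum_distrib_left mult.left_commute)
  finally have YN: "Y = c * of_real N"
    unfolding N_def cnj_mult by simp
  have "cnj Y = (\<Sum>i<n. \<Sum>j<n. of_real (S $$ (i, j)) * v $ i * cnj (v $ j))"
    unfolding Y_def by (simp add: cnj_sum)
  also have "\<dots> = (\<Sum>j<n. \<Sum>i<n. of_real (S $$ (i, j)) * v $ i * cnj (v $ j))"
    by (rule sum.swap)
  also have "\<dots> = Y"
    unfolding Y_def using sym by (intro sum.cong refl) (simp add: mult.commute mult.left_commute)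
  finally have "Im Y = 0" by (metis cnj.simps(2) neg_equal_zero)
  moreover have "0 < N"
  proof -
    obtain i where i: "i < n" "v $ i \<noteq> 0"
      using v(1,2) by (metis eq_vecI carrier_vecD index_zero_vec)
    then have "0 < (Re (v $ i))\<^sup>2 + (Im (v $ i))\<^sup>2"
      by (auto simp: complex_eq_iff add_pos_nonneg add_nonneg_pos)
    also have "\<dots> \<le> N"
      unfolding N_def by (rule member_le_sum[where f = "\<lambda>i. (Re (v $ i))\<^sup>2 + (Im (v $ i))\<^sup>2"]) (use i in auto)
    finally show ?thesis .
  qed
  ultimately show ?thesis unfolding YN by simp
qed

lemma char_poly_gram_real_factorization:
  fixes M :: "real mat"
  assumes M: "M \<in> carrier_mat n n"
  shows "\<exists>as. length as = n \<and> char_poly (transpose_mat M * M) = (\<Prod>a\<leftarrow>as. [:- a, 1:])"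
proof -
  define S where "S = transpose_mat M * M"
  have S: "S \<in> carrier_mat n n" unfolding S_def using M by simp
  let ?S = "map_mat complex_of_real S"
  have Sc: "?S \<in> carrier_mat n n" using S by simp
  obtain cs where cs: "char_poly ?S = (\<Prod>c\<leftarrow>cs. [:- c, 1:])" "length cs = n"
    using char_poly_factorized[OF Sc] by blast
  have sym: "S $$ (i, j) = S $$ (j, i)" if "i < n" "j < n" for i j
    unfolding S_def using M that by (simp add: scalar_prod_def atLeast0LessThan mult.commute)
  have "Im c = 0" if "c \<in> set cs" for c
  proof (rule eigenvalue_real_symmetric_is_real[OF S sym])
    show "eigenvalue ?S c"
      unfolding eigenvalue_root_char_poly[OF Sc] cs(1) poly_prod_list
      using that by (auto simp: prod_list_zero_iff)
  qed auto
  then have cs_real: "cs = map (complex_of_real \<circ> Re) cs"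
    by (intro map_idI[symmetric]) (auto simp: complex_eq_iff)
  interpret h: map_poly_inj_idom_hom complex_of_real ..
  have "map_poly complex_of_real (char_poly S) = char_poly ?S"
    by (rule of_real_hom.char_poly_hom[OF S, symmetric])
  also have "\<dots> = map_poly complex_of_real (\<Prod>a\<leftarrow>map Re cs. [:- a, 1:])"
    unfolding cs(1) by (subst cs_real) (simp add: h.hom_prod_list o_def hom_distribs)
  finally have "char_poly S = (\<Prod>a\<leftarrow>map Re cs. [:- a, 1:])" by (rule h.injectivity)
  then show ?thesis unfolding S_def using cs(2) by (intro exI[of _ "map Re cs"]) simp
qed

lemma char_poly_gram_root_nonneg:
  fixes M :: "real mat"
  assumes M: "M \<in> carrier_mat n n"
    and cp: "char_poly (transpose_mat M * M) = (\<Prod>a\<leftarrow>as. [:- a, 1:])" and a: "a \<in> set as"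
  shows "0 \<le> a"
proof -
  have S: "transpose_mat M * M \<in> carrier_mat n n" using M by simp
  have "eigenvalue (transpose_mat M * M) a"
    unfolding eigenvalue_root_char_poly[OF S] cp poly_prod_list
    using a by (auto simp: prod_list_zero_iff)
  then obtain v where v: "v \<in> carrier_vec n" "v \<noteq> 0\<^sub>v n" "(transpose_mat M * M) *\<^sub>v v = a \<cdot>\<^sub>v v"
    unfolding eigenvalue_def eigenvector_def using S by auto
  have Mv: "M *\<^sub>v v \<in> carrier_vec n" using M v(1) by simp
  have "a * sqnorm v = v \<bullet> ((transpose_mat M * M) *\<^sub>v v)"
    using v by (simp add: sqnorm_def)
  also have "\<dots> = v \<bullet> (transpose_mat M *\<^sub>v (M *\<^sub>v v))"
    using M v(1) by (simp add: assoc_mult_mat_vec[of _ n n M n])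
  also have "\<dots> = sqnorm (M *\<^sub>v v)"
    unfolding sqnorm_def using transpose_vec_mult_scalar[OF M v(1) Mv] comm_scalar_prod[OF v(1)] M Mv
    by simp
  finally have "0 \<le> a * sqnorm v" using sqnorm_nonneg by simp
  with sqnorm_pos[OF v(1,2)] show ?thesis by (simp add: zero_le_mult_iff)
qed

lemma prod_char_poly_gram_roots:
  fixes M :: "real mat"
  assumes M: "M \<in> carrier_mat n n"
    and cp: "char_poly (transpose_mat M * M) = (\<Prod>a\<leftarrow>as. [:- a, 1:])" and len: "length as = n"
  shows "prod_list as = (det M)\<^sup>2"
proof -
  define S where "S = transpose_mat M * M"
  have S: "S \<in> carrier_mat n n" unfolding S_def using M by simp
  have "char_matrix S 0 = S" unfolding char_matrix_def using S by (intro eq_matI) auto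
  moreover have "- S = (-1) \<cdot>\<^sub>m S" using S by (intro eq_matI) auto
  ultimately have "poly (char_poly S) 0 = (-1) ^ n * det S"
    unfolding char_poly_matrix[OF S] using S by (simp add: det_smult)
  moreover have "poly (char_poly S) 0 = (-1) ^ n * prod_list as"
    unfolding S_def cp poly_prod_list using len by (induct as arbitrary: n) auto
  ultimately have "prod_list as = det S" by simp
  also have "\<dots> = (det M)\<^sup>2"
    unfolding S_def using M by (simp add: det_mult[of _ n] det_transpose power2_eq_square)
  finally show ?thesis .
qed

lemma sing_vals_char_poly_gram:
  fixes M :: "real mat"
  assumes M: "M \<in> carrier_mat n n"
  obtains as where "length as = n" and "char_poly (transpose_mat M * M) = (\<Prod>a\<leftarrow>as. [:- a, 1:])"
    and "sing_vals M = sort (map sqrt as)"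
proof -
  let ?P = "\<lambda>as. length as = dim_col M \<and> char_poly (transpose_mat M * M) = (\<Prod>a\<leftarrow>as. [:- a, 1:])"
  have "?P (SOME as. ?P as)"
    using someI_ex[of ?P] char_poly_gram_real_factorization[OF M] M by simp
  then show ?thesis
    using M by (intro that[of "SOME as. ?P as"]) (auto simp: sing_vals_def)
qed

lemma sigma_nonneg:
  assumes M: "M \<in> carrier_mat n n" and i: "i \<in> {1..n}"
  shows "0 \<le> sigma M i"
proof -
  obtain as where as: "length as = n" "char_poly (transpose_mat M * M) = (\<Prod>a\<leftarrow>as. [:- a, 1:])"
    and sv: "sing_vals M = sort (map sqrt as)"
    by (rule sing_vals_char_poly_gram[OF M])
  have "sigma M i \<in> set (sing_vals M)"
    unfolding sigma_def using i as(1) sv by (intro nth_mem) auto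
  then show ?thesis
    unfolding sv using char_poly_gram_root_nonneg[OF M as(2)] by auto
qed

lemma prod_list_le_power_length:
  fixes xs :: "real list"
  assumes "\<And>x. x \<in> set xs \<Longrightarrow> 0 \<le> x \<and> x \<le> m"
  shows "prod_list xs \<le> m ^ length xs"
  using assms
proof (induct xs)
  case (Cons x xs)
  then have "0 \<le> x" "x \<le> m" "0 \<le> prod_list xs" "prod_list xs \<le> m ^ length xs"
    by (auto intro: prod_list_nonneg)
  then show ?case by (simp add: mult_mono)
qed simp

text \<open>The largest eigenvalue of \<open>M\<^sup>T M\<close> dominates the \<open>n\<close>-th root of their product
  \<open>(det M)\<^sup>2\<close>; the cap at \<open>1\<close> avoids taking roots.\<close>
lemma sigma_max_ge:
  assumes M: "M \<in> carrier_mat n n" and n: "0 < n"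
  shows "sqrt (min 1 ((det M)\<^sup>2)) \<le> sigma M n"
proof -
  obtain as where as: "length as = n" "char_poly (transpose_mat M * M) = (\<Prod>a\<leftarrow>as. [:- a, 1:])"
    and sv: "sing_vals M = sort (map sqrt as)"
    by (rule sing_vals_char_poly_gram[OF M])
  have nonneg: "\<And>a. a \<in> set as \<Longrightarrow> 0 \<le> a" using char_poly_gram_root_nonneg[OF M as(2)] .
  define amax where "amax = Max (set as)"
  have "as \<noteq> []" using as(1) n by auto
  then have amax: "amax \<in> set as" "\<And>a. a \<in> set as \<Longrightarrow> a \<le> amax" unfolding amax_def by auto
  have "(det M)\<^sup>2 \<le> amax ^ n"
    unfolding prod_char_poly_gram_roots[OF M as(2,1), symmetric] as(1)[symmetric]
    by (rule prod_list_le_power_length) (use nonneg amax in auto)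
  moreover have "amax ^ n \<le> amax" if "amax \<le> 1"
    using power_decreasing[of 1 n amax] that n nonneg[OF amax(1)] by simp
  ultimately have "min 1 ((det M)\<^sup>2) \<le> amax" by (cases "amax \<le> 1") auto
  then have "sqrt (min 1 ((det M)\<^sup>2)) \<le> sqrt amax" by (rule real_sqrt_le_mono)
  also have "sqrt amax \<le> sing_vals M ! (n - 1)"
  proof -
    have "sqrt amax \<in> set (sing_vals M)" unfolding sv using amax(1) by simp
    then obtain j where "j < length (sing_vals M)" "sing_vals M ! j = sqrt amax"
      unfolding in_set_conv_nth by blast
    moreover have "sorted (sing_vals M)" "length (sing_vals M) = n" using sv as(1) by simp_all
    ultimately show ?thesis
      using sorted_nth_mono[of "sing_vals M" j "n - 1"] by simp
  qed
  finally show ?thesis unfolding sigma_def .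
qed

section \<open>The attacked closed loop\<close>

lemma perturbed_recursion_norm_bound:
  assumes G: "G \<in> carrier_mat n n" and E: "E \<in> carrier_mat n n"
    and x: "\<And>k. k < N \<Longrightarrow> x k \<in> carrier_vec n" and z: "\<And>k. k < N \<Longrightarrow> z k \<in> carrier_vec n"
    and x0: "x 0 = z 0"
    and step: "\<And>k. Suc k < N \<Longrightarrow> x (Suc k) = G *\<^sub>v x k + (z (Suc k) - E *\<^sub>v z k)"
    and z_le: "\<And>k. k < N \<Longrightarrow> vec_norm1 (z k) \<le> R"
  shows "k < N \<Longrightarrow> vec_norm1 (x k) \<le> (1 + mat_norm1 E) * (1 + mat_norm1 G) ^ k * R"
proof (induct k)
  case 0
  have "0 \<le> mat_norm1 E * R" using z_le[OF 0] vec_norm1_nonneg[of "z 0"] mat_norm1_nonneg[of E] by simp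
  then show ?case using x0 z_le[OF 0] by (simp add: algebra_simps)
next
  case (Suc k)
  let ?g = "mat_norm1 G" and ?e = "mat_norm1 E" and ?c = "(1 + mat_norm1 E) * R"
  have k: "k < N" using Suc(2) by simp
  have R: "0 \<le> R" using z_le[OF k] vec_norm1_nonneg[of "z k"] by simp
  have g: "0 \<le> ?g" and e: "0 \<le> ?e" by (rule mat_norm1_nonneg)+
  have Gx: "G *\<^sub>v x k \<in> carrier_vec n" by (rule mult_mat_vec_carrier[OF G x[OF k]])
  have Ez: "E *\<^sub>v z k \<in> carrier_vec n" by (rule mult_mat_vec_carrier[OF E z[OF k]])
  have "vec_norm1 (x (Suc k)) \<le> vec_norm1 (G *\<^sub>v x k) + vec_norm1 (z (Suc k) - E *\<^sub>v z k)"
    unfolding step[OF Suc(2)] by (rule vec_norm1_add_le[of _ n]) (use Gx Ez z[OF Suc(2)] in auto)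
  also have "\<dots> \<le> ?g * vec_norm1 (x k) + (vec_norm1 (z (Suc k)) + ?e * vec_norm1 (z k))"
    using vec_norm1_mult_mat_vec_le[OF G x[OF k]] vec_norm1_mult_mat_vec_le[OF E z[OF k]]
      vec_norm1_diff_le[OF z[OF Suc(2)] Ez] by linarith
  also have "\<dots> \<le> ?g * (?c * (1 + ?g) ^ k) + (R + ?e * R)"
    using Suc(1)[OF k] z_le[OF Suc(2)] z_le[OF k] g e
    by (intro add_mono mult_left_mono) (auto simp: mult_ac)
  also have "\<dots> \<le> ?g * (?c * (1 + ?g) ^ k) + ?c * (1 + ?g) ^ k"
    using mult_left_mono[of 1 "(1 + ?g) ^ k" ?c] R e g by (simp add: algebra_simps)
  also have "\<dots> = ?c * (1 + ?g) ^ Suc k" by (simp add: algebra_simps)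
  finally show ?case by (simp add: mult_ac)
qed

locale plant_observer =
  fixes nx Nh :: nat and A B C CJ L DA :: "real mat"
  assumes nx: "0 < nx" and Nh: "0 < Nh"
    and A: "A \<in> carrier_mat nx nx" and B: "B \<in> carrier_mat nx nx" and C: "C \<in> carrier_mat nx nx"
    and CJ: "CJ \<in> carrier_mat nx nx" and L: "L \<in> carrier_mat nx nx" and DA: "DA \<in> carrier_mat nx nx"
    and B_inv: "invertible_mat B" and C_inv: "invertible_mat C" and CJ_inv: "invertible_mat CJ"
begin

definition A_e :: "real mat" where "A_e = A - L * C"

definition A_x :: "real mat \<Rightarrow> real mat" where "A_x K = A + B * K * C"

lemma A_e_carrier: "A_e \<in> carrier_mat nx nx"
  unfolding A_e_def using A L C by auto

lemma A_x_carrier: "K \<in> carrier_mat nx nx \<Longrightarrow> A_x K \<in> carrier_mat nx nx"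
  unfolding A_x_def using A B C by auto

lemma F_p_carrier [simp]: "F_p nx Nh A B C CJ K \<in> carrier_mat (nx * Nh) (nx * Nh)"
  unfolding F_p_def by (rule mult_carrier_mat[where n = "nx * Nh"]) auto

lemma F_r_carrier [simp]: "F_r nx Nh A B C L DA K \<in> carrier_mat (nx * Nh) (nx * Nh)"
  unfolding F_r_def by (intro mult_carrier_mat[where n = "nx * Nh"] add_carrier_mat) auto

definition closed_loop_state :: "real mat \<Rightarrow> real vec \<Rightarrow> real vec" where
  "closed_loop_state K a = F_a nx Nh (A_x K) B *\<^sub>v a"

definition estimation_error :: "real mat \<Rightarrow> real vec \<Rightarrow> real vec" where
  "estimation_error K a = F_a nx Nh A_e B *\<^sub>v a + F_ex nx Nh A_e DA *\<^sub>v closed_loop_state K a"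

lemma closed_loop_state_carrier:
  "a \<in> carrier_vec (nx * Nh) \<Longrightarrow> closed_loop_state K a \<in> carrier_vec (nx * Nh)"
  unfolding closed_loop_state_def by (rule mult_mat_vec_carrier[OF F_a_carrier])

lemma estimation_error_carrier:
  "a \<in> carrier_vec (nx * Nh) \<Longrightarrow> estimation_error K a \<in> carrier_vec (nx * Nh)"
  unfolding estimation_error_def
  by (intro add_carrier_vec mult_mat_vec_carrier[OF F_a_carrier] mult_mat_vec_carrier[OF F_ex_carrier]
      closed_loop_state_carrier)

lemma F_p_mult_vec:
  assumes "a \<in> carrier_vec (nx * Nh)"
  shows "F_p nx Nh A B C CJ K *\<^sub>v a = kron_eye nx Nh CJ *\<^sub>v closed_loop_state K a"
  unfolding F_p_def closed_loop_state_def A_x_def[symmetric] using assms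
  by (intro assoc_mult_mat_vec[of _ "nx * Nh" "nx * Nh" _ "nx * Nh"]) auto

lemma F_r_mult_vec:
  assumes a: "a \<in> carrier_vec (nx * Nh)"
  shows "F_r nx Nh A B C L DA K *\<^sub>v a = kron_eye nx Nh C *\<^sub>v estimation_error K a"
proof -
  let ?n = "nx * Nh"
  have FF: "F_ex nx Nh A_e DA * F_a nx Nh (A_x K) B \<in> carrier_mat ?n ?n"
    by (rule mult_carrier_mat[where n = ?n]) auto
  have "F_r nx Nh A B C L DA K *\<^sub>v a
      = kron_eye nx Nh C *\<^sub>v ((F_a nx Nh A_e B + F_ex nx Nh A_e DA * F_a nx Nh (A_x K) B) *\<^sub>v a)"
    unfolding F_r_def A_x_def[symmetric] A_e_def[symmetric] using a FF
    by (intro assoc_mult_mat_vec[of _ ?n ?n _ ?n]) auto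
  also have "(F_a nx Nh A_e B + F_ex nx Nh A_e DA * F_a nx Nh (A_x K) B) *\<^sub>v a = estimation_error K a"
    unfolding estimation_error_def closed_loop_state_def using a FF
    by (simp add: add_mult_distrib_mat_vec[of _ ?n ?n] assoc_mult_mat_vec[of _ ?n ?n _ ?n])
  finally show ?thesis .
qed

text \<open>The attack enters both recursions as \<open>B a\<^sub>k\<^sub>+\<^sub>1\<close> and cancels in the difference.\<close>
lemma closed_loop_state_recursion:
  assumes K: "K \<in> carrier_mat nx nx" and a: "a \<in> carrier_vec (nx * Nh)"
  defines "x \<equiv> \<lambda>k. block_vec nx (closed_loop_state K a) k"
    and "e \<equiv> \<lambda>k. block_vec nx (estimation_error K a) k"
  shows "x 0 = e 0"
    and "Suc k < Nh \<Longrightarrow> x (Suc k) = (A_x K - DA) *\<^sub>v x k + (e (Suc k) - A_e *\<^sub>v e k)"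
proof -
  have AxK: "A_x K \<in> carrier_mat nx nx" using A_x_carrier[OF K] .
  have Ae: "A_e \<in> carrier_mat nx nx" using A_e_carrier .
  let ?X = "closed_loop_state K a" and ?U = "F_a nx Nh A_e B *\<^sub>v a"
  let ?W = "F_ex nx Nh A_e DA *\<^sub>v ?X"
  have Xc: "?X \<in> carrier_vec (nx * Nh)" using closed_loop_state_carrier[OF a] .
  have Uc: "?U \<in> carrier_vec (nx * Nh)" by (rule mult_mat_vec_carrier[OF F_a_carrier a])
  have Wc: "?W \<in> carrier_vec (nx * Nh)" by (rule mult_mat_vec_carrier[OF F_ex_carrier Xc])
  have e_blocks: "e k = block_vec nx ?U k + block_vec nx ?W k" if "k < Nh" for k
    unfolding e_def estimation_error_def using Uc Wc that by (rule block_vec_add)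
  have x_blocks: "x k = forced_response nx (A_x K) B a k" if "k < Nh" for k
    unfolding x_def closed_loop_state_def using that by (rule block_vec_F_a_mult[OF AxK B a])
  have "block_vec nx ?U 0 = B *\<^sub>v block_vec nx a 0"
    using Ae B by (simp add: block_vec_F_a_mult[OF Ae B a Nh] forced_response_0)
  moreover have "block_vec nx ?W 0 = 0\<^sub>v nx" by (simp add: block_vec_F_ex_mult[OF Ae DA Xc Nh])
  ultimately show "x 0 = e 0"
    unfolding e_blocks[OF Nh] x_blocks[OF Nh] forced_response_0[OF AxK B]
    using mult_mat_vec_carrier[OF B block_vec_carrier] by simp
  assume k: "Suc k < Nh"
  let ?u = "block_vec nx ?U k" and ?w = "block_vec nx ?W k" and ?a = "block_vec nx a (Suc k)"
  have "x (Suc k) = A_x K *\<^sub>v x k + B *\<^sub>v ?a"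
    using x_blocks k forced_response_Suc[OF AxK B] by simp
  moreover have "e (Suc k) = (A_e *\<^sub>v ?u + B *\<^sub>v ?a) + (A_e *\<^sub>v ?w + DA *\<^sub>v x k)"
    unfolding e_blocks[OF k] x_def
    using block_vec_F_a_mult[OF Ae B a] forced_response_Suc[OF Ae B]
      block_vec_F_ex_mult_Suc[OF Ae DA Xc k] k by simp
  moreover have "A_e *\<^sub>v e k = A_e *\<^sub>v ?u + A_e *\<^sub>v ?w"
    unfolding e_blocks[OF Suc_lessD[OF k]] by (rule mult_add_distrib_mat_vec[OF Ae]) auto
  moreover have "(A_x K - DA) *\<^sub>v x k = A_x K *\<^sub>v x k - DA *\<^sub>v x k"
    unfolding x_def by (rule minus_mult_distrib_mat_vec[OF AxK DA]) auto
  ultimately show "x (Suc k) = (A_x K - DA) *\<^sub>v x k + (e (Suc k) - A_e *\<^sub>v e k)"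
    using carrier_matD[OF AxK] carrier_matD[OF Ae] carrier_matD[OF B] carrier_matD[OF DA]
    unfolding x_def by (intro eq_vecI) auto
qed

lemma C_inverse_exists: "\<exists>N. N \<in> carrier_mat nx nx \<and> C * N = 1\<^sub>m nx \<and> N * C = 1\<^sub>m nx"
  by (rule invertible_mat_inverse_exists[OF C C_inv])

lemma estimation_error_block_le:
  assumes a: "a \<in> carrier_vec (nx * Nh)" and k: "k < Nh"
  shows "vec_norm1 (block_vec nx (estimation_error K a) k)
           \<le> mat_norm1 (minv C) * vec_norm1 (F_r nx Nh A B C L DA K *\<^sub>v a)"
proof -
  let ?r = "F_r nx Nh A B C L DA K *\<^sub>v a"
  have Ec: "estimation_error K a \<in> carrier_vec (nx * Nh)" by (rule estimation_error_carrier[OF a])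
  have "block_vec nx (estimation_error K a) k = minv C *\<^sub>v block_vec nx ?r k"
    unfolding F_r_mult_vec[OF a] block_vec_kron_eye_mult[OF C Ec k]
    by (rule minv_mult_mat_vec_cancel[OF C C_inverse_exists, symmetric]) simp
  then have "vec_norm1 (block_vec nx (estimation_error K a) k) \<le> mat_norm1 (minv C) * vec_norm1 (block_vec nx ?r k)"
    using vec_norm1_mult_mat_vec_le[OF minv_inverse(1)[OF C C_inverse_exists]] by simp
  also have "\<dots> \<le> mat_norm1 (minv C) * vec_norm1 ?r"
    using mult_mat_vec_carrier[OF F_r_carrier a]
    by (intro mult_left_mono vec_norm1_block_le[OF _ k] mat_norm1_nonneg)
  finally show ?thesis .
qed

lemma closed_loop_state_block_le:
  assumes K: "K \<in> carrier_mat nx nx" and a: "a \<in> carrier_vec (nx * Nh)" and k: "k < Nh"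
  shows "vec_norm1 (block_vec nx (closed_loop_state K a) k)
    \<le> (1 + mat_norm1 A_e) * (1 + mat_norm1 (A_x K - DA)) ^ (Nh - 1)
        * (mat_norm1 (minv C) * vec_norm1 (F_r nx Nh A B C L DA K *\<^sub>v a))"
proof -
  let ?G = "A_x K - DA" and ?R = "mat_norm1 (minv C) * vec_norm1 (F_r nx Nh A B C L DA K *\<^sub>v a)"
  have G: "?G \<in> carrier_mat nx nx" using DA by (rule minus_carrier_mat)
  have R: "0 \<le> ?R" by (simp add: mat_norm1_nonneg vec_norm1_nonneg)
  have "vec_norm1 (block_vec nx (closed_loop_state K a) k) \<le> (1 + mat_norm1 A_e) * (1 + mat_norm1 ?G) ^ k * ?R"
    using closed_loop_state_recursion[OF K a] estimation_error_block_le[OF a] k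
    by (intro perturbed_recursion_norm_bound[OF G A_e_carrier, where N = Nh]) auto
  also have "\<dots> \<le> (1 + mat_norm1 A_e) * (1 + mat_norm1 ?G) ^ (Nh - 1) * ?R"
    using k R mat_norm1_nonneg[of A_e] mat_norm1_nonneg[of ?G]
    by (intro mult_right_mono mult_left_mono power_increasing) auto
  finally show ?thesis .
qed

definition residual_gain :: "real mat \<Rightarrow> real" where
  "residual_gain K = Nh * mat_norm1 CJ * (1 + mat_norm1 A_e) * mat_norm1 (minv C)
     * (1 + mat_norm1 (A_x K - DA)) ^ (Nh - 1)"

lemma residual_gain_nonneg: "0 \<le> residual_gain K"
  unfolding residual_gain_def by (simp add: mat_norm1_nonneg add_nonneg_nonneg)

lemma performance_le_residual:
  assumes K: "K \<in> carrier_mat nx nx" and a: "a \<in> carrier_vec (nx * Nh)"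
  shows "vec_norm1 (F_p nx Nh A B C CJ K *\<^sub>v a) \<le> residual_gain K * vec_norm1 (F_r nx Nh A B C L DA K *\<^sub>v a)"
proof -
  let ?X = "closed_loop_state K a"
  let ?bound = "(1 + mat_norm1 A_e) * (1 + mat_norm1 (A_x K - DA)) ^ (Nh - 1)
    * (mat_norm1 (minv C) * vec_norm1 (F_r nx Nh A B C L DA K *\<^sub>v a))"
  have Xc: "?X \<in> carrier_vec (nx * Nh)" by (rule closed_loop_state_carrier[OF a])
  have "vec_norm1 (F_p nx Nh A B C CJ K *\<^sub>v a) = (\<Sum>k<Nh. vec_norm1 (CJ *\<^sub>v block_vec nx ?X k))"
    unfolding F_p_mult_vec[OF a] vec_norm1_eq_sum_blocks[OF mult_mat_vec_carrier[OF kron_eye_carrier Xc]]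
    by (intro sum.cong refl) (simp add: block_vec_kron_eye_mult[OF CJ Xc])
  also have "\<dots> \<le> (\<Sum>k<Nh. mat_norm1 CJ * ?bound)"
  proof (intro sum_mono)
    fix k assume "k \<in> {..<Nh}"
    then have k: "k < Nh" by simp
    have "vec_norm1 (CJ *\<^sub>v block_vec nx ?X k) \<le> mat_norm1 CJ * vec_norm1 (block_vec nx ?X k)"
      by (rule vec_norm1_mult_mat_vec_le[OF CJ block_vec_carrier])
    also have "\<dots> \<le> mat_norm1 CJ * ?bound"
      by (rule mult_left_mono[OF closed_loop_state_block_le[OF K a k] mat_norm1_nonneg])
    finally show "vec_norm1 (CJ *\<^sub>v block_vec nx ?X k) \<le> mat_norm1 CJ * ?bound" .
  qed
  also have "\<dots> = residual_gain K * vec_norm1 (F_r nx Nh A B C L DA K *\<^sub>v a)"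
    unfolding residual_gain_def by (simp add: mult_ac)
  finally show ?thesis .
qed

lemma F_p_mult_vec_eq_0:
  assumes K: "K \<in> carrier_mat nx nx" and a: "a \<in> carrier_vec (nx * Nh)"
    and Fp: "F_p nx Nh A B C CJ K *\<^sub>v a = 0\<^sub>v (nx * Nh)"
  shows "a = 0\<^sub>v (nx * Nh)"
proof -
  define X where "X = closed_loop_state K a"
  have AxK: "A_x K \<in> carrier_mat nx nx" using A_x_carrier[OF K] .
  have Xc: "X \<in> carrier_vec (nx * Nh)" unfolding X_def by (rule closed_loop_state_carrier[OF a])
  have X0: "block_vec nx X k = 0\<^sub>v nx" if k: "k < Nh" for k
  proof (rule invertible_mat_mult_vec_eq_0[OF CJ CJ_inv block_vec_carrier])
    have "CJ *\<^sub>v block_vec nx X k = block_vec nx (F_p nx Nh A B C CJ K *\<^sub>v a) k"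
      unfolding F_p_mult_vec[OF a, of K, folded X_def] by (rule block_vec_kron_eye_mult[OF CJ Xc k, symmetric])
    then show "CJ *\<^sub>v block_vec nx X k = 0\<^sub>v nx"
      unfolding Fp block_vec_zero[OF k] .
  qed
  have Ba: "B *\<^sub>v block_vec nx a k = 0\<^sub>v nx" if k: "k < Nh" for k
  proof (cases k)
    case 0
    have "block_vec nx X 0 = B *\<^sub>v block_vec nx a 0"
      unfolding X_def closed_loop_state_def block_vec_F_a_mult[OF AxK B a Nh] by (rule forced_response_0[OF AxK B])
    then show ?thesis unfolding 0 X0[OF Nh] by (rule sym)
  next
    case (Suc j)
    with k have j: "Suc j < Nh" "j < Nh" by simp_all
    have "block_vec nx X (Suc j) = A_x K *\<^sub>v block_vec nx X j + B *\<^sub>v block_vec nx a (Suc j)"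
      unfolding X_def closed_loop_state_def block_vec_F_a_mult[OF AxK B a j(1)] block_vec_F_a_mult[OF AxK B a j(2)]
      by (rule forced_response_Suc[OF AxK B])
    then have "0\<^sub>v nx = A_x K *\<^sub>v 0\<^sub>v nx + B *\<^sub>v block_vec nx a (Suc j)"
      unfolding X0[OF j(1)] X0[OF j(2)] .
    then show ?thesis
      unfolding Suc using AxK mult_mat_vec_carrier[OF B block_vec_carrier] by simp
  qed
  show ?thesis
  proof (rule block_vec_eqI[OF a zero_carrier_vec])
    fix k assume k: "k < Nh"
    show "block_vec nx a k = block_vec nx (0\<^sub>v (nx * Nh)) k"
      unfolding block_vec_zero[OF k] by (rule invertible_mat_mult_vec_eq_0[OF B B_inv block_vec_carrier Ba[OF k]])
  qed
qed

lemma F_r_mult_vec_eq_0: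
  assumes K: "K \<in> carrier_mat nx nx" and a: "a \<in> carrier_vec (nx * Nh)"
    and Fr: "F_r nx Nh A B C L DA K *\<^sub>v a = 0\<^sub>v (nx * Nh)"
  shows "a = 0\<^sub>v (nx * Nh)"
proof (rule F_p_mult_vec_eq_0[OF K a])
  have "vec_norm1 (F_p nx Nh A B C CJ K *\<^sub>v a) \<le> 0"
    using performance_le_residual[OF K a] unfolding Fr by (simp add: vec_norm1_def)
  then have "vec_norm1 (F_p nx Nh A B C CJ K *\<^sub>v a) = 0"
    using vec_norm1_nonneg by (rule antisym)
  then show "F_p nx Nh A B C CJ K *\<^sub>v a = 0\<^sub>v (nx * Nh)"
    using vec_norm1_eq_0_imp_zero[of "F_p nx Nh A B C CJ K *\<^sub>v a"] carrier_matD(1)[OF F_p_carrier]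
    by simp
qed

lemma det_F_p_nonzero: "K \<in> carrier_mat nx nx \<Longrightarrow> det (F_p nx Nh A B C CJ K) \<noteq> 0"
  unfolding det_0_iff_vec_prod_zero[OF F_p_carrier] using F_p_mult_vec_eq_0 by blast

lemma det_F_r_nonzero: "K \<in> carrier_mat nx nx \<Longrightarrow> det (F_r nx Nh A B C L DA K) \<noteq> 0"
  unfolding det_0_iff_vec_prod_zero[OF F_r_carrier] using F_r_mult_vec_eq_0 by blast

definition kappa :: "real mat \<Rightarrow> real mat" where
  "kappa K = F_p nx Nh A B C CJ K * minv (F_r nx Nh A B C L DA K)"

lemma F_r_inverse_exists:
  "K \<in> carrier_mat nx nx \<Longrightarrow> \<exists>N. N \<in> carrier_mat (nx * Nh) (nx * Nh)
     \<and> F_r nx Nh A B C L DA K * N = 1\<^sub>m (nx * Nh) \<and> N * F_r nx Nh A B C L DA K = 1\<^sub>m (nx * Nh)"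
  by (rule det_nonzero_inverse_exists[OF F_r_carrier det_F_r_nonzero])

lemma kappa_carrier:
  assumes "K \<in> carrier_mat nx nx"
  shows "kappa K \<in> carrier_mat (nx * Nh) (nx * Nh)"
  unfolding kappa_def
  by (rule mult_carrier_mat[OF F_p_carrier minv_inverse(1)[OF F_r_carrier F_r_inverse_exists[OF assms]]])

lemma det_kappa_nonzero:
  assumes K: "K \<in> carrier_mat nx nx"
  shows "det (kappa K) \<noteq> 0"
  using det_F_p_nonzero[OF K] det_F_r_nonzero[OF K] det_minv[OF F_r_carrier det_F_r_nonzero[OF K]]
  unfolding kappa_def det_mult[OF F_p_carrier minv_inverse(1)[OF F_r_carrier F_r_inverse_exists[OF K]]]
  by simp

text \<open>Column \<open>j\<close> of \<open>\<kappa>\<close> is \<open>F\<^sub>p b\<close> for the attack \<open>b\<close> with \<open>F\<^sub>r b = e\<^sub>j\<close>.\<close>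
lemma abs_kappa_index_le:
  assumes K: "K \<in> carrier_mat nx nx" and i: "i < nx * Nh" and j: "j < nx * Nh"
  shows "\<bar>kappa K $$ (i, j)\<bar> \<le> residual_gain K"
proof -
  let ?n = "nx * Nh" and ?Fr = "F_r nx Nh A B C L DA K" and ?Fp = "F_p nx Nh A B C CJ K"
  note Fri = minv_inverse[OF F_r_carrier F_r_inverse_exists[OF K]]
  define e where "e = (unit_vec ?n j :: real vec)"
  define b where "b = minv ?Fr *\<^sub>v e"
  have e: "e \<in> carrier_vec ?n" unfolding e_def by simp
  have b: "b \<in> carrier_vec ?n" unfolding b_def using Fri(1) e by simp
  have Frb: "?Fr *\<^sub>v b = e"
    unfolding b_def using assoc_mult_mat_vec[OF F_r_carrier Fri(1) e, symmetric] Fri(2) e by simp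
  have "kappa K *\<^sub>v e = ?Fp *\<^sub>v b"
    unfolding kappa_def b_def by (rule assoc_mult_mat_vec[OF F_p_carrier Fri(1) e])
  moreover have "kappa K $$ (i, j) = (kappa K *\<^sub>v e) $ i"
    unfolding e_def using kappa_carrier[OF K] i j by simp
  moreover have "i < dim_vec (?Fp *\<^sub>v b)" using i carrier_matD(1)[OF F_p_carrier] by simp
  ultimately have "\<bar>kappa K $$ (i, j)\<bar> \<le> vec_norm1 (?Fp *\<^sub>v b)"
    using abs_index_le_vec_norm1 by metis
  also have "\<dots> \<le> residual_gain K * vec_norm1 (?Fr *\<^sub>v b)" by (rule performance_le_residual[OF K b])
  also have "vec_norm1 (?Fr *\<^sub>v b) = 1" unfolding Frb e_def using j by (rule vec_norm1_unit_vec)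
  finally show ?thesis by simp
qed


lemma residual_gain_polynomial_bound:
  obtains c where "0 \<le> c"
    and "\<And>K. K \<in> carrier_mat nx nx \<Longrightarrow> residual_gain K \<le> c * (1 + frob_norm K) ^ (Nh - 1)"
proof -
  define c0 where "c0 = Nh * mat_norm1 CJ * (1 + mat_norm1 A_e) * mat_norm1 (minv C)"
  define \<gamma> where "\<gamma> = 1 + mat_norm1 A + mat_norm1 DA + mat_norm1 B * real (nx * nx) * mat_norm1 C"
  have c0: "0 \<le> c0" unfolding c0_def by (simp add: mat_norm1_nonneg add_nonneg_nonneg)
  have \<gamma>: "1 \<le> \<gamma>" unfolding \<gamma>_def by (simp add: mat_norm1_nonneg)
  have "residual_gain K \<le> c0 * \<gamma> ^ (Nh - 1) * (1 + frob_norm K) ^ (Nh - 1)"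
    if K: "K \<in> carrier_mat nx nx" for K
  proof -
    let ?k = "frob_norm K"
    have BK: "B * K \<in> carrier_mat nx nx" using B K by simp
    have "mat_norm1 (B * K * C) \<le> mat_norm1 B * mat_norm1 K * mat_norm1 C"
      using mat_norm1_mult_le[OF BK C] mat_norm1_mult_le[OF B K] mat_norm1_nonneg[of C]
      by (meson mult_right_mono order_trans)
    also have "\<dots> \<le> mat_norm1 B * (real (nx * nx) * ?k) * mat_norm1 C"
      by (intro mult_right_mono mult_left_mono mat_norm1_le_frob_norm[OF K] mat_norm1_nonneg)
    finally have BKC: "mat_norm1 (B * K * C) \<le> mat_norm1 B * real (nx * nx) * mat_norm1 C * ?k"
      by (simp add: mult_ac)
    have "mat_norm1 (A_x K - DA) \<le> mat_norm1 A + mat_norm1 (B * K * C) + mat_norm1 DA"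
      using mat_norm1_diff_le[OF A_x_carrier[OF K] DA] mat_norm1_add_le[of A nx nx "B * K * C"] A BK C
      unfolding A_x_def by fastforce
    moreover have "\<gamma> * (1 + ?k) = \<gamma> + (mat_norm1 A + mat_norm1 DA) * ?k + ?k
        + mat_norm1 B * real (nx * nx) * mat_norm1 C * ?k"
      unfolding \<gamma>_def by (simp add: algebra_simps)
    moreover have "0 \<le> (mat_norm1 A + mat_norm1 DA) * ?k"
      and "0 \<le> mat_norm1 B * real (nx * nx) * mat_norm1 C"
      by (simp_all add: mat_norm1_nonneg frob_norm_nonneg)
    ultimately have "1 + mat_norm1 (A_x K - DA) \<le> \<gamma> * (1 + ?k)"
      using BKC frob_norm_nonneg[of K] unfolding \<gamma>_def by linarith
    then have "(1 + mat_norm1 (A_x K - DA)) ^ (Nh - 1) \<le> (\<gamma> * (1 + ?k)) ^ (Nh - 1)"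
      by (rule power_mono) (simp add: mat_norm1_nonneg add_nonneg_nonneg)
    then have "c0 * (1 + mat_norm1 (A_x K - DA)) ^ (Nh - 1) \<le> c0 * (\<gamma> * (1 + ?k)) ^ (Nh - 1)"
      by (rule mult_left_mono[OF _ c0])
    then show ?thesis
      unfolding residual_gain_def c0_def by (simp add: power_mult_distrib mult.assoc)
  qed
  then show ?thesis using c0 \<gamma> by (intro that[of "c0 * \<gamma> ^ (Nh - 1)"]) simp_all
qed

lemma q_worst_le_residual_gain:
  assumes K: "K \<in> carrier_mat nx nx" and eps: "0 \<le> eps_r"
  shows "q_worst nx Nh eps_r A B C CJ L DA K \<le> eps_r * real (nx * Nh) * (residual_gain K)\<^sup>2"
  unfolding q_worst_def
proof (rule cSup_least)
  let ?n = "nx * Nh" and ?Fr = "F_r nx Nh A B C L DA K" and ?Fp = "F_p nx Nh A B C CJ K"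
  have "sqnorm (?Fr *\<^sub>v 0\<^sub>v ?n) \<le> eps_r" using eps by (simp add: sqnorm_def mult_mat_vec_zero[OF F_r_carrier])
  then have "sqnorm (?Fp *\<^sub>v 0\<^sub>v ?n)
      \<in> {sqnorm (?Fp *\<^sub>v a) |a. a \<in> carrier_vec ?n \<and> sqnorm (?Fr *\<^sub>v a) \<le> eps_r}"
    by (intro CollectI exI[of _ "0\<^sub>v ?n"]) simp
  then show "{sqnorm (?Fp *\<^sub>v a) |a. a \<in> carrier_vec ?n \<and> sqnorm (?Fr *\<^sub>v a) \<le> eps_r} \<noteq> {}"
    by (rule ex_in_conv[THEN iffD1, OF exI])
  fix x assume "x \<in> {sqnorm (?Fp *\<^sub>v a) |a. a \<in> carrier_vec ?n \<and> sqnorm (?Fr *\<^sub>v a) \<le> eps_r}"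
  then obtain a where a: "a \<in> carrier_vec ?n" "sqnorm (?Fr *\<^sub>v a) \<le> eps_r"
    and x: "x = sqnorm (?Fp *\<^sub>v a)"
    by blast
  have "x \<le> (vec_norm1 (?Fp *\<^sub>v a))\<^sup>2" unfolding x by (rule sqnorm_le_vec_norm1_sq)
  also have "\<dots> \<le> (residual_gain K)\<^sup>2 * (vec_norm1 (?Fr *\<^sub>v a))\<^sup>2"
    using power_mono[OF performance_le_residual[OF K a(1)] vec_norm1_nonneg, of 2]
    by (simp add: power_mult_distrib)
  also have "\<dots> \<le> (residual_gain K)\<^sup>2 * (real ?n * sqnorm (?Fr *\<^sub>v a))"
    using vec_norm1_sq_le_dim_mult_sqnorm[of "?Fr *\<^sub>v a"] carrier_matD(1)[OF F_r_carrier]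
    by (intro mult_left_mono) auto
  also have "\<dots> \<le> (residual_gain K)\<^sup>2 * (real ?n * eps_r)"
    using a(2) by (intro mult_left_mono) auto
  finally show "x \<le> eps_r * real ?n * (residual_gain K)\<^sup>2" by (simp add: mult_ac)
qed

lemma q_worst_polynomial_bound:
  assumes eps: "0 \<le> eps_r"
  obtains \<mu> where "0 \<le> \<mu>"
    and "\<And>K. K \<in> carrier_mat nx nx \<Longrightarrow>
      q_worst nx Nh eps_r A B C CJ L DA K \<le> \<mu> * (1 + (frob_norm K)\<^sup>2) ^ (nx * Nh - 1)"
proof -
  obtain c where c: "0 \<le> c"
    and gain: "\<And>K. K \<in> carrier_mat nx nx \<Longrightarrow> residual_gain K \<le> c * (1 + frob_norm K) ^ (Nh - 1)"
    using residual_gain_polynomial_bound by blast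
  define \<mu> where "\<mu> = eps_r * real (nx * Nh) * c\<^sup>2 * 2 ^ (Nh - 1)"
  have \<mu>: "0 \<le> \<mu>" unfolding \<mu>_def using eps by simp
  have "q_worst nx Nh eps_r A B C CJ L DA K \<le> \<mu> * (1 + (frob_norm K)\<^sup>2) ^ (nx * Nh - 1)"
    if K: "K \<in> carrier_mat nx nx" for K
  proof -
    let ?k = "frob_norm K"
    have k: "0 \<le> ?k" by (rule frob_norm_nonneg)
    have "(residual_gain K)\<^sup>2 \<le> (c * (1 + ?k) ^ (Nh - 1))\<^sup>2"
      by (rule power_mono[OF gain[OF K] residual_gain_nonneg])
    also have "\<dots> = c\<^sup>2 * ((1 + ?k)\<^sup>2) ^ (Nh - 1)"
      by (simp add: power_mult_distrib power_mult[symmetric] mult.commute)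
    also have "\<dots> \<le> c\<^sup>2 * (2 * (1 + ?k\<^sup>2)) ^ (Nh - 1)"
    proof -
      have "0 \<le> (?k - 1)\<^sup>2" by simp
      then have "(1 + ?k)\<^sup>2 \<le> 2 * (1 + ?k\<^sup>2)" by (simp add: power2_eq_square algebra_simps)
      then show ?thesis by (intro mult_left_mono power_mono) auto
    qed
    also have "\<dots> \<le> c\<^sup>2 * 2 ^ (Nh - 1) * (1 + ?k\<^sup>2) ^ (nx * Nh - 1)"
    proof -
      have "Nh - 1 \<le> nx * Nh - 1" using nx by (simp add: diff_le_mono)
      then have "(1 + ?k\<^sup>2) ^ (Nh - 1) \<le> (1 + ?k\<^sup>2) ^ (nx * Nh - 1)"
        by (rule power_increasing) simp
      then have "2 ^ (Nh - 1) * (1 + ?k\<^sup>2) ^ (Nh - 1) \<le> 2 ^ (Nh - 1) * (1 + ?k\<^sup>2) ^ (nx * Nh - 1)"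
        by (rule mult_left_mono) simp
      then show ?thesis unfolding power_mult_distrib mult.assoc by (rule mult_left_mono) simp
    qed
    finally have "(residual_gain K)\<^sup>2 \<le> c\<^sup>2 * 2 ^ (Nh - 1) * (1 + ?k\<^sup>2) ^ (nx * Nh - 1)" .
    then have "eps_r * real (nx * Nh) * (residual_gain K)\<^sup>2
        \<le> eps_r * real (nx * Nh) * (c\<^sup>2 * 2 ^ (Nh - 1) * (1 + ?k\<^sup>2) ^ (nx * Nh - 1))"
      using eps by (intro mult_left_mono) auto
    then show ?thesis
      using q_worst_le_residual_gain[OF K eps] unfolding \<mu>_def by (simp add: mult_ac)
  qed
  with \<mu> show ?thesis by (rule that)
qed


lemma minv_kappa_carrier: "K \<in> carrier_mat nx nx \<Longrightarrow> minv (kappa K) \<in> carrier_mat (nx * Nh) (nx * Nh)"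
  by (rule minv_inverse(1)[OF kappa_carrier det_nonzero_inverse_exists[OF kappa_carrier det_kappa_nonzero]])

lemma sum_sigma_nonneg:
  "K \<in> carrier_mat nx nx \<Longrightarrow> 0 \<le> (\<Sum>i = 2..nx * Nh. sigma (minv (kappa K)) i)"
  by (intro sum_nonneg sigma_nonneg[OF minv_kappa_carrier]) auto

lemma sum_sigma_lower_bound:
  assumes n: "2 \<le> nx * Nh"
  obtains s where "0 < s"
    and "\<And>K. K \<in> carrier_mat nx nx \<Longrightarrow> frob_norm K \<le> 1 \<Longrightarrow>
           s \<le> (\<Sum>i = 2..nx * Nh. sigma (minv (kappa K)) i)"
proof -
  let ?n = "nx * Nh"
  obtain c where c: "0 \<le> c"
    and gain: "\<And>K. K \<in> carrier_mat nx nx \<Longrightarrow> residual_gain K \<le> c * (1 + frob_norm K) ^ (Nh - 1)"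
    using residual_gain_polynomial_bound by blast
  define D where "D = fact ?n * (c * 2 ^ (Nh - 1)) ^ ?n + 1"
  have D: "1 \<le> D" unfolding D_def using c by simp
  have "sqrt (min 1 (1 / D\<^sup>2)) \<le> (\<Sum>i = 2..?n. sigma (minv (kappa K)) i)"
    if K: "K \<in> carrier_mat nx nx" and k: "frob_norm K \<le> 1" for K
  proof -
    have "(1 + frob_norm K) ^ (Nh - 1) \<le> 2 ^ (Nh - 1)"
      using k frob_norm_nonneg[of K] by (intro power_mono) auto
    then have "residual_gain K \<le> c * 2 ^ (Nh - 1)"
      by (rule order_trans[OF gain[OF K] mult_left_mono[OF _ c]])
    then have "\<bar>det (kappa K)\<bar> \<le> D"
      using abs_det_le_fact_mult_pow[OF kappa_carrier[OF K] order_trans[OF abs_kappa_index_le[OF K]]]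
      unfolding D_def by fastforce
    then have "(det (kappa K))\<^sup>2 \<le> D\<^sup>2"
      by (metis abs_ge_zero power2_abs power_mono)
    then have "1 / D\<^sup>2 \<le> (det (minv (kappa K)))\<^sup>2"
      using det_kappa_nonzero[OF K] det_minv[OF kappa_carrier[OF K] det_kappa_nonzero[OF K]]
      by (simp add: power_divide frac_le)
    then have "sqrt (min 1 (1 / D\<^sup>2)) \<le> sqrt (min 1 ((det (minv (kappa K)))\<^sup>2))"
      by simp
    also have "\<dots> \<le> sigma (minv (kappa K)) ?n"
      using nx Nh by (intro sigma_max_ge[OF minv_kappa_carrier[OF K]]) simp
    also have "\<dots> \<le> (\<Sum>i = 2..?n. sigma (minv (kappa K)) i)"
      using n by (intro member_le_sum sigma_nonneg[OF minv_kappa_carrier[OF K]]) auto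
    finally show ?thesis .
  qed
  moreover have "0 < sqrt (min 1 (1 / D\<^sup>2))" using D by simp
  ultimately show ?thesis using that by blast
qed

definition qbar :: "real \<Rightarrow> real mat \<Rightarrow> real" where
  "qbar \<eta> K = \<eta> * (frob_norm K)\<^sup>2 + (\<Sum>i = 2..nx * Nh. sigma (minv (kappa K)) i)"

lemma qbar_coercive:
  assumes \<eta>: "0 < \<eta>" and n: "2 \<le> nx * Nh"
  obtains \<delta> where "0 < \<delta>"
    and "\<And>K. K \<in> carrier_mat nx nx \<Longrightarrow> \<delta> * (1 + (frob_norm K)\<^sup>2) \<le> qbar \<eta> K"
proof -
  obtain s where s: "0 < s"
    and sum_ge: "\<And>K. K \<in> carrier_mat nx nx \<Longrightarrow> frob_norm K \<le> 1 \<Longrightarrow>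
      s \<le> (\<Sum>i = 2..nx * Nh. sigma (minv (kappa K)) i)"
    using sum_sigma_lower_bound[OF n] by blast
  define \<delta> where "\<delta> = min (\<eta> / 2) (s / 2)"
  have "\<delta> * (1 + (frob_norm K)\<^sup>2) \<le> qbar \<eta> K" if K: "K \<in> carrier_mat nx nx" for K
  proof (cases "frob_norm K \<le> 1")
    case True
    then have "(frob_norm K)\<^sup>2 \<le> 1" using frob_norm_nonneg[of K] by (simp add: power_le_one)
    then have "\<delta> * (1 + (frob_norm K)\<^sup>2) \<le> s / 2 * 2"
      using s \<eta> unfolding \<delta>_def by (intro mult_mono) auto
    then show ?thesis
      using sum_ge[OF K True] \<eta> unfolding qbar_def by (simp add: add_increasing)
  next
    case False
    then have "1 \<le> (frob_norm K)\<^sup>2" by (simp add: one_le_power)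
    then have "\<delta> * (1 + (frob_norm K)\<^sup>2) \<le> \<eta> / 2 * (2 * (frob_norm K)\<^sup>2)"
      using s \<eta> unfolding \<delta>_def by (intro mult_mono) auto
    then show ?thesis
      using sum_sigma_nonneg[OF K] unfolding qbar_def by simp
  qed
  moreover have "0 < \<delta>" unfolding \<delta>_def using s \<eta> by simp
  ultimately show ?thesis using that by blast
qed

lemma q_worst_le_qbar_power:
  assumes eps: "0 \<le> eps_r" and \<eta>: "0 < \<eta>"
  shows "\<exists>\<mu>. \<forall>K \<in> carrier_mat nx nx.
           q_worst nx Nh eps_r A B C CJ L DA K \<le> \<mu> * qbar \<eta> K ^ (nx * Nh - 1)"
proof -
  let ?f = "nx * Nh - 1"
  obtain c where c: "0 \<le> c" and q_le: "\<And>K. K \<in> carrier_mat nx nx \<Longrightarrow>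
      q_worst nx Nh eps_r A B C CJ L DA K \<le> c * (1 + (frob_norm K)\<^sup>2) ^ ?f"
    using q_worst_polynomial_bound[OF eps] by blast
  show ?thesis
  proof (cases "?f = 0")
    case True
    then show ?thesis using q_le by auto
  next
    case False
    then have "2 \<le> nx * Nh" by simp
    then obtain \<delta> where \<delta>: "0 < \<delta>"
      and qbar_ge: "\<And>K. K \<in> carrier_mat nx nx \<Longrightarrow> \<delta> * (1 + (frob_norm K)\<^sup>2) \<le> qbar \<eta> K"
      using qbar_coercive[OF \<eta>] by blast
    have "q_worst nx Nh eps_r A B C CJ L DA K \<le> c / \<delta> ^ ?f * qbar \<eta> K ^ ?f"
      if K: "K \<in> carrier_mat nx nx" for K
    proof -
      have "1 + (frob_norm K)\<^sup>2 \<le> qbar \<eta> K / \<delta>"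
        using qbar_ge[OF K] \<delta> by (simp add: field_simps)
      then have "c * (1 + (frob_norm K)\<^sup>2) ^ ?f \<le> c * (qbar \<eta> K / \<delta>) ^ ?f"
        by (intro mult_left_mono power_mono c) auto
      then show ?thesis using q_le[OF K] by (simp add: power_divide)
    qed
    then show ?thesis by blast
  qed
qed

end

theorem lemma2:
  fixes nx Nh :: nat and eps_r eta :: real
    and A B C CJ L DA :: "real mat"
  assumes "0 < nx" and "0 < Nh" and "0 < eps_r" and "0 < eta"
    and "A \<in> carrier_mat nx nx" and "B \<in> carrier_mat nx nx" and "C \<in> carrier_mat nx nx"
    and "CJ \<in> carrier_mat nx nx" and "L \<in> carrier_mat nx nx" and "DA \<in> carrier_mat nx nx"
    and "invertible_mat B" and "invertible_mat C" and "invertible_mat CJ"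
  shows "\<exists>\<mu>::real. \<forall>K \<in> carrier_mat nx nx.
     (let kappa = F_p nx Nh A B C CJ K * minv (F_r nx Nh A B C L DA K);
          qbar = eta * (frob_norm K)\<^sup>2 + (\<Sum>i = 2..nx * Nh. sigma (minv kappa) i);
          f = nx * Nh - 1
      in q_worst nx Nh eps_r A B C CJ L DA K \<le> \<mu> * qbar ^ f)"
proof -
  interpret plant_observer nx Nh A B C CJ L DA by unfold_locales (use assms in auto)
  from q_worst_le_qbar_power[OF less_imp_le[OF assms(3)] assms(4)]
  show ?thesis unfolding Let_def qbar_def kappa_def .
qed

end
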